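(* Let $C$ be a weakly compact convex subset of a Banach space $X$ and let $T:C\to C$ be an orbitally Kannan mapping which diminishes the radius of orbits. Then the set $\{r_x(O_T(x)) : x\in C\}$ has a smallest element.
   Context: For $x\in X$ and $A\subseteq X$, $r_x(A)=\sup\{\|x-y\|:y\in A\}$; $O_T(x)=\{x,Tx,T^2x,\dots\}$. $T$ is orbitally Kannan if $\|Tx-Ty\|\le\frac12\big(r_x(O_T(x))+r_y(O_T(y))\big)$ for all $x,y\in C$. $T$ diminishes the radius of orbits if $r_{Tx}(O_T(Tx))\le r_x(O_T(x))$ for all $x\in C$. *)

theory Defs
  imports "HOL-Analysis.Analysis"
begin

definition weak_topology :: "'a::real_normed_vector topology" where
  "weak_topology = topology_generated_by
     {f -` U | f U. bounded_linear (f :: 'a \<Rightarrow> real) \<and> open U}"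

definition weakly_compact :: "'a::real_normed_vector set \<Rightarrow> bool" where
  "weakly_compact C \<longleftrightarrow> compactin weak_topology C"

definition rad :: "'a::real_normed_vector \<Rightarrow> 'a set \<Rightarrow> real" where
  "rad x A = Sup {norm (x - y) | y. y \<in> A}"

definition orbit :: "('a \<Rightarrow> 'a) \<Rightarrow> 'a \<Rightarrow> 'a set" where
  "orbit T x = range (\<lambda>n. (T ^^ n) x)"

definition orbitally_kannan :: "('a::real_normed_vector \<Rightarrow> 'a) \<Rightarrow> 'a set \<Rightarrow> bool" where
  "orbitally_kannan T C \<longleftrightarrow> (\<forall>x\<in>C. \<forall>y\<in>C.
     norm (T x - T y) \<le> (rad x (orbit T x) + rad y (orbit T y)) / 2)"

definition diminishes_radius_of_orbits :: "('a::real_normed_vector \<Rightarrow> 'a) \<Rightarrow> 'a set \<Rightarrow> bool" where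
  "diminishes_radius_of_orbits T C \<longleftrightarrow>
     (\<forall>x\<in>C. rad (T x) (orbit T (T x)) \<le> rad x (orbit T x))"

end

theory Submission
  imports Defs
begin

text \<open>Let \<open>r\<close> be the infimum of the orbit radii \<open>\<phi> x = r\<^sub>x(O\<^sub>T(x))\<close> over \<open>C\<close> and suppose
  it is not attained. For \<open>z \<in> C\<close> choose \<open>m\<close> with \<open>\<parallel>z - T\<^sup>m z\<parallel> > (r + \<phi> z)/2\<close> and a
  norming functional \<open>f\<close> of \<open>z - T\<^sup>m z\<close>. A weakly open half-space \<open>{f > const}\<close> then
  contains \<open>z\<close>, while the Kannan estimate \<open>\<parallel>T y - T\<^sup>m z\<parallel> \<le> (\<phi> y + \<phi> z)/2\<close> keeps \<open>T y\<close>
  out of it as soon as \<open>\<phi> y\<close> is close enough to \<open>r\<close>. By weak compactness finitely many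
  such half-spaces cover \<open>C\<close>, with a common closeness bound; any \<open>y \<in> C\<close> with \<open>\<phi> y\<close>
  that close to \<open>r\<close> has \<open>T y \<in> C\<close> outside all of them, a contradiction.\<close>

section \<open>The Hahn-Banach theorem\<close>

text \<open>Partial linear functionals dominated by \<open>p\<close>, represented by their graphs, so that
  extension is inclusion and Zorn's lemma applies directly.\<close>

definition dominated_linear_graph :: "('a::real_vector \<Rightarrow> real) \<Rightarrow> ('a \<times> real) set \<Rightarrow> bool" where
  "dominated_linear_graph p G \<longleftrightarrow> single_valued G \<and> (0, 0) \<in> G \<and>
     (\<forall>x a y b. (x, a) \<in> G \<longrightarrow> (y, b) \<in> G \<longrightarrow> (x + y, a + b) \<in> G) \<and>
     (\<forall>x a c. (x, a) \<in> G \<longrightarrow> (c *\<^sub>R x, c * a) \<in> G) \<and>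
     (\<forall>x a. (x, a) \<in> G \<longrightarrow> a \<le> p x)"

lemma dominated_linear_graphD:
  assumes "dominated_linear_graph p G"
  shows "\<And>x a b. (x, a) \<in> G \<Longrightarrow> (x, b) \<in> G \<Longrightarrow> a = b"
    and "(0, 0) \<in> G"
    and "\<And>x a y b. (x, a) \<in> G \<Longrightarrow> (y, b) \<in> G \<Longrightarrow> (x + y, a + b) \<in> G"
    and "\<And>x a c. (x, a) \<in> G \<Longrightarrow> (c *\<^sub>R x, c * a) \<in> G"
    and "\<And>x a. (x, a) \<in> G \<Longrightarrow> a \<le> p x"
  using assms unfolding dominated_linear_graph_def single_valued_def by blast+

lemma dominated_linear_graph_Union_chain:
  assumes "\<C> \<in> chains {G. dominated_linear_graph p G}" "\<C> \<noteq> {}"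
  shows "dominated_linear_graph p (\<Union>\<C>)"
proof -
  have common: "\<exists>G\<in>\<C>. (x, a) \<in> G \<and> (y, b) \<in> G"
    if "(x, a) \<in> \<Union>\<C>" "(y, b) \<in> \<Union>\<C>" for x a y b
    using that chainsD[OF assms(1)] by blast
  have "dominated_linear_graph p G" if "G \<in> \<C>" for G
    using that chainsD2[OF assms(1)] by blast
  note D = dominated_linear_graphD[OF this]
  show ?thesis
    unfolding dominated_linear_graph_def single_valued_def
  proof (intro conjI allI impI)
    show "(0, 0) \<in> \<Union>\<C>"
      using assms(2) D(2) by blast
  next
    fix x a b assume "(x, a) \<in> \<Union>\<C>" "(x, b) \<in> \<Union>\<C>"
    then show "a = b" using common D(1) by meson
  next
    fix x a y b assume "(x, a) \<in> \<Union>\<C>" "(y, b) \<in> \<Union>\<C>"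
    then show "(x + y, a + b) \<in> \<Union>\<C>" using common D(3) by (meson UnionI)
  next
    fix x a c assume "(x, a) \<in> \<Union>\<C>"
    then show "(c *\<^sub>R x, c * a) \<in> \<Union>\<C>" using D(4) by blast
  next
    fix x a assume "(x, a) \<in> \<Union>\<C>"
    then show "a \<le> p x" using D(5) by blast
  qed
qed

lemma dominated_linear_graph_extension_constant:
  assumes subadditive: "\<And>x y. p (x + y) \<le> p x + p y"
    and G: "dominated_linear_graph p G"
  obtains c where "\<And>s a. (s, a) \<in> G \<Longrightarrow> a - p (s - x0) \<le> c"
    and "\<And>s a. (s, a) \<in> G \<Longrightarrow> c \<le> p (s + x0) - a"
proof -
  note D = dominated_linear_graphD[OF G]
  have sep: "a - p (s - x0) \<le> p (t + x0) - b" if "(s, a) \<in> G" "(t, b) \<in> G" for s a t b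
  proof -
    have "a + b \<le> p ((s - x0) + (t + x0))" using D(5)[OF D(3)[OF that]] by simp
    also have "\<dots> \<le> p (s - x0) + p (t + x0)" by (rule subadditive)
    finally show ?thesis by simp
  qed
  define L where "L = {a - p (s - x0) | s a. (s, a) \<in> G}"
  have "L \<noteq> {}" using D(2) unfolding L_def by blast
  moreover have "bdd_above L"
    using sep[OF _ D(2)] unfolding L_def by (intro bdd_aboveI) blast
  ultimately show thesis
    using sep by (intro that[of "Sup L"] cSup_upper cSup_least) (auto simp: L_def)
qed

definition graph_extension :: "('a::real_vector \<times> real) set \<Rightarrow> 'a \<Rightarrow> real \<Rightarrow> ('a \<times> real) set" where
  "graph_extension G x0 c = {(s + t *\<^sub>R x0, a + t * c) | s a t. (s, a) \<in> G}"

lemma graph_extension_dominated: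
  assumes homogeneous: "\<And>c x. 0 < c \<Longrightarrow> p (c *\<^sub>R x) = c * p x"
    and G: "dominated_linear_graph p G"
    and lower: "\<And>s a. (s, a) \<in> G \<Longrightarrow> a - p (s - x0) \<le> c"
    and upper: "\<And>s a. (s, a) \<in> G \<Longrightarrow> c \<le> p (s + x0) - a"
    and "(s, a) \<in> G"
  shows "a + t * c \<le> p (s + t *\<^sub>R x0)"
proof -
  note D = dominated_linear_graphD[OF G]
  consider "t = 0" | "0 < t" | "t < 0" by linarith
  then show ?thesis
  proof cases
    case 1
    then show ?thesis using D(5)[OF \<open>(s, a) \<in> G\<close>] by simp
  next
    case 2
    have "c \<le> p ((1 / t) *\<^sub>R s + x0) - a / t"
      using upper[OF D(4)[OF \<open>(s, a) \<in> G\<close>, of "1 / t"]] by simp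
    then have "t * c \<le> t * p ((1 / t) *\<^sub>R s + x0) - a"
      using 2 by (simp add: field_simps)
    also have "t * p ((1 / t) *\<^sub>R s + x0) = p (s + t *\<^sub>R x0)"
      using 2 homogeneous[of t "(1 / t) *\<^sub>R s + x0"] by (simp add: scaleR_add_right)
    finally show ?thesis by simp
  next
    case 3
    have "a / (- t) - p ((1 / (- t)) *\<^sub>R s - x0) \<le> c"
      using lower[OF D(4)[OF \<open>(s, a) \<in> G\<close>, of "1 / (- t)"]] by simp
    then have "a - (- t) * p ((1 / (- t)) *\<^sub>R s - x0) \<le> (- t) * c"
      using 3 by (simp add: field_simps)
    also have "(- t) * p ((1 / (- t)) *\<^sub>R s - x0) = p (s + t *\<^sub>R x0)"
      using 3 homogeneous[of "- t" "(1 / (- t)) *\<^sub>R s - x0"] by (simp add: scaleR_diff_right)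
    finally show ?thesis by simp
  qed
qed

lemma graph_extension_coordinates_unique:
  assumes G: "dominated_linear_graph p G" and "x0 \<notin> Domain G"
    and "(s, a) \<in> G" "(s', a') \<in> G" and eq: "s + t *\<^sub>R x0 = s' + t' *\<^sub>R x0"
  shows "t = t'" "s = s'"
proof -
  note D = dominated_linear_graphD[OF G]
  show "t = t'"
  proof (rule ccontr)
    assume "t \<noteq> t'"
    have "(s' + (- 1) *\<^sub>R s, a' + (- 1) * a) \<in> G"
      using D(3)[OF \<open>(s', a') \<in> G\<close> D(4)[OF \<open>(s, a) \<in> G\<close>]] .
    from D(4)[OF this, of "1 / (t - t')"]
    have "((1 / (t - t')) *\<^sub>R (s' - s), (a' - a) / (t - t')) \<in> G" by simp
    moreover have "(1 / (t - t')) *\<^sub>R (s' - s) = x0"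
    proof -
      have "s' - s = (t - t') *\<^sub>R x0" using eq by (simp add: algebra_simps)
      then show ?thesis using \<open>t \<noteq> t'\<close> by simp
    qed
    ultimately show False using \<open>x0 \<notin> Domain G\<close> by (metis Domain.DomainI)
  qed
  then show "s = s'" using eq by simp
qed

lemma dominated_linear_graph_extend:
  assumes subadditive: "\<And>x y. p (x + y) \<le> p x + p y"
    and homogeneous: "\<And>c x. 0 < c \<Longrightarrow> p (c *\<^sub>R x) = c * p x"
    and G: "dominated_linear_graph p G" and x0: "x0 \<notin> Domain G"
  obtains G' where "dominated_linear_graph p G'" "G \<subset> G'"
proof -
  note D = dominated_linear_graphD[OF G]
  obtain c where lower: "\<And>s a. (s, a) \<in> G \<Longrightarrow> a - p (s - x0) \<le> c"
    and upper: "\<And>s a. (s, a) \<in> G \<Longrightarrow> c \<le> p (s + x0) - a"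
    using dominated_linear_graph_extension_constant[OF subadditive G] by blast
  define G' where "G' = graph_extension G x0 c"
  have mem: "(s + t *\<^sub>R x0, a + t * c) \<in> G'" if "(s, a) \<in> G" for s a t
    using that unfolding G'_def graph_extension_def by blast
  have elim: "\<exists>s a t. (s, a) \<in> G \<and> x = s + t *\<^sub>R x0 \<and> b = a + t * c" if "(x, b) \<in> G'" for x b
    using that unfolding G'_def graph_extension_def by blast
  have "dominated_linear_graph p G'"
    unfolding dominated_linear_graph_def single_valued_def
  proof (intro conjI allI impI)
    fix x b b' assume "(x, b) \<in> G'" "(x, b') \<in> G'"
    then obtain s a t s' a' t' where "(s, a) \<in> G" "(s', a') \<in> G"
      and "x = s + t *\<^sub>R x0" "b = a + t * c" "x = s' + t' *\<^sub>R x0" "b' = a' + t' * c"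
      using elim by meson
    then show "b = b'"
      using graph_extension_coordinates_unique[OF G x0] D(1) by metis
  next
    show "(0, 0) \<in> G'" using mem[OF D(2), of 0] by simp
  next
    fix x b y b' assume "(x, b) \<in> G'" "(y, b') \<in> G'"
    then obtain s a t s' a' t' where "(s, a) \<in> G" "(s', a') \<in> G"
      and "x = s + t *\<^sub>R x0" "b = a + t * c" "y = s' + t' *\<^sub>R x0" "b' = a' + t' * c"
      using elim by meson
    then show "(x + y, b + b') \<in> G'"
      using mem[OF D(3), of s a s' a' "t + t'"] by (simp add: algebra_simps)
  next
    fix x b r assume "(x, b) \<in> G'"
    then obtain s a t where "(s, a) \<in> G" "x = s + t *\<^sub>R x0" "b = a + t * c"
      using elim by meson
    then show "(r *\<^sub>R x, r * b) \<in> G'"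
      using mem[OF D(4), of s a r "r * t"] by (simp add: algebra_simps)
  next
    fix x b assume "(x, b) \<in> G'"
    then obtain s a t where "(s, a) \<in> G" "x = s + t *\<^sub>R x0" "b = a + t * c"
      using elim by meson
    then show "b \<le> p x"
      using graph_extension_dominated[OF homogeneous G lower upper] by blast
  qed
  moreover have "G \<subseteq> G'" using mem[of _ _ 0] by auto
  moreover have "(x0, c) \<in> G' - G" using mem[OF D(2), of 1] x0 by auto
  ultimately show thesis using that by blast
qed

theorem hahn_banach_dominated:
  assumes subadditive: "\<And>x y. p (x + y) \<le> p x + p y"
    and homogeneous: "\<And>c x. 0 < c \<Longrightarrow> p (c *\<^sub>R x) = c * p x"
    and G0: "dominated_linear_graph p G0"
  obtains f where "linear f" "\<And>x. f x \<le> p x" "\<And>x a. (x, a) \<in> G0 \<Longrightarrow> f x = a"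
proof -
  define \<A> where "\<A> = {G. dominated_linear_graph p G \<and> G0 \<subseteq> G}"
  have "\<exists>U\<in>\<A>. \<forall>X\<in>\<C>. X \<subseteq> U" if "\<C> \<in> chains \<A>" for \<C>
  proof (cases "\<C> = {}")
    case True
    then show ?thesis using G0 unfolding \<A>_def by blast
  next
    case False
    have "\<C> \<in> chains {G. dominated_linear_graph p G}"
      using that unfolding chains_def \<A>_def by blast
    then have "\<Union>\<C> \<in> \<A>"
      using dominated_linear_graph_Union_chain False chainsD2[OF that] unfolding \<A>_def by blast
    then show ?thesis by blast
  qed
  then obtain M where "M \<in> \<A>" and maximal: "\<forall>X\<in>\<A>. M \<subseteq> X \<longrightarrow> X = M"
    using Zorn_Lemma2[of \<A>] by blast
  then have M: "dominated_linear_graph p M" and "G0 \<subseteq> M" unfolding \<A>_def by auto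
  note D = dominated_linear_graphD[OF M]
  have total: "x \<in> Domain M" for x
  proof (rule ccontr)
    assume "x \<notin> Domain M"
    then obtain M' where "dominated_linear_graph p M'" "M \<subset> M'"
      using dominated_linear_graph_extend[OF subadditive homogeneous M] by blast
    then show False using maximal \<open>G0 \<subseteq> M\<close> unfolding \<A>_def by blast
  qed
  define f where "f x = (THE a. (x, a) \<in> M)" for x
  have graph: "f x = a" if "(x, a) \<in> M" for x a
    unfolding f_def using that D(1) by blast
  have fM: "(x, f x) \<in> M" for x
    using total[of x] graph by blast
  have "linear f"
  proof (rule linearI)
    show "f (x + y) = f x + f y" for x y using graph[OF D(3)[OF fM fM]] .
    show "f (r *\<^sub>R x) = r *\<^sub>R f x" for r x using graph[OF D(4)[OF fM]] by simp
  qed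
  moreover have "f x \<le> p x" for x using D(5)[OF fM] .
  ultimately show thesis using that graph \<open>G0 \<subseteq> M\<close> by blast
qed

lemma dominated_linear_graph_norm_line:
  fixes w :: "'a::real_normed_vector"
  shows "dominated_linear_graph norm (range (\<lambda>t. (t *\<^sub>R w, t * norm w)))"
  unfolding dominated_linear_graph_def single_valued_def
proof (intro conjI allI impI)
  fix x a b assume "(x, a) \<in> range (\<lambda>t. (t *\<^sub>R w, t * norm w))"
    "(x, b) \<in> range (\<lambda>t. (t *\<^sub>R w, t * norm w))"
  then show "a = b" by (cases "w = 0") auto
next
  show "(0, 0) \<in> range (\<lambda>t. (t *\<^sub>R w, t * norm w))" by (auto intro: image_eqI[of _ _ 0])
next
  fix x a y b assume "(x, a) \<in> range (\<lambda>t. (t *\<^sub>R w, t * norm w))"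
    "(y, b) \<in> range (\<lambda>t. (t *\<^sub>R w, t * norm w))"
  then obtain s t where "x = s *\<^sub>R w" "a = s * norm w" "y = t *\<^sub>R w" "b = t * norm w" by auto
  then show "(x + y, a + b) \<in> range (\<lambda>t. (t *\<^sub>R w, t * norm w))"
    by (auto intro: image_eqI[of _ _ "s + t"] simp: algebra_simps)
next
  fix x a c assume "(x, a) \<in> range (\<lambda>t. (t *\<^sub>R w, t * norm w))"
  then obtain s where "x = s *\<^sub>R w" "a = s * norm w" by auto
  then show "(c *\<^sub>R x, c * a) \<in> range (\<lambda>t. (t *\<^sub>R w, t * norm w))"
    by (auto intro: image_eqI[of _ _ "c * s"])
next
  fix x a assume "(x, a) \<in> range (\<lambda>t. (t *\<^sub>R w, t * norm w))"
  then show "a \<le> norm x" by (auto intro!: mult_right_mono)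
qed

lemma exists_norming_functional:
  fixes w :: "'a::real_normed_vector"
  obtains f where "bounded_linear f" "f w = norm w" "\<And>u. f u \<le> norm u"
proof -
  define G0 where "G0 = range (\<lambda>t. (t *\<^sub>R w, t * norm w))"
  have "dominated_linear_graph norm G0"
    unfolding G0_def by (rule dominated_linear_graph_norm_line)
  moreover have "norm (c *\<^sub>R x) = c * norm x" if "0 < c" for c and x :: 'a
    using that by simp
  ultimately obtain f where "linear f" and le: "\<And>x. f x \<le> norm x"
    and "\<And>x a. (x, a) \<in> G0 \<Longrightarrow> f x = a"
    using hahn_banach_dominated[of norm] norm_triangle_ineq by blast
  then have "f w = norm w"
    unfolding G0_def using rangeI[of "\<lambda>t. (t *\<^sub>R w, t * norm w)" 1] by simp
  have "norm (f x) \<le> norm x * 1" for x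
    using le[of x] le[of "- x"] linear_neg[OF \<open>linear f\<close>, of x] by simp
  then have "bounded_linear f"
    using \<open>linear f\<close> unfolding bounded_linear_def bounded_linear_axioms_def by blast
  then show thesis using that \<open>f w = norm w\<close> le by blast
qed

section \<open>Orbit radii of orbitally Kannan maps\<close>

abbreviation orbit_radius :: "('a::real_normed_vector \<Rightarrow> 'a) \<Rightarrow> 'a \<Rightarrow> real" where
  "orbit_radius T x \<equiv> rad x (orbit T x)"

lemma orbit_radius_eq_SUP: "orbit_radius T z = (SUP n. norm (z - (T ^^ n) z))"
proof -
  have "{norm (z - y) | y. y \<in> orbit T z} = range (\<lambda>n. norm (z - (T ^^ n) z))"
    unfolding orbit_def by auto
  then show ?thesis unfolding rad_def by simp
qed

lemma orbit_radius_le: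
  assumes "\<And>n. norm (z - (T ^^ n) z) \<le> K"
  shows "orbit_radius T z \<le> K"
  unfolding orbit_radius_eq_SUP using assms by (intro cSUP_least) auto

lemma funpow_mem:
  assumes "\<forall>x\<in>C. T x \<in> C" "z \<in> C"
  shows "(T ^^ k) z \<in> C"
  using assms by (induction k) auto

lemma diminishes_radius_of_orbits_funpow:
  assumes dim: "diminishes_radius_of_orbits T C" and maps: "\<forall>x\<in>C. T x \<in> C" and "z \<in> C"
  shows "orbit_radius T ((T ^^ k) z) \<le> orbit_radius T z"
proof (induction k)
  case (Suc k)
  have "orbit_radius T ((T ^^ Suc k) z) \<le> orbit_radius T ((T ^^ k) z)"
    using dim funpow_mem[OF maps \<open>z \<in> C\<close>, of k] unfolding diminishes_radius_of_orbits_def by simp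
  with Suc.IH show ?case by linarith
qed simp

lemma orbitally_kannan_funpow:
  assumes kannan: "orbitally_kannan T C" and dim: "diminishes_radius_of_orbits T C"
    and maps: "\<forall>x\<in>C. T x \<in> C" and "y \<in> C" "z \<in> C" "0 < m"
  shows "norm (T y - (T ^^ m) z) \<le> (orbit_radius T y + orbit_radius T z) / 2"
proof -
  obtain k where m: "m = Suc k" using \<open>0 < m\<close> gr0_implies_Suc by blast
  have "norm (T y - T ((T ^^ k) z)) \<le> (orbit_radius T y + orbit_radius T ((T ^^ k) z)) / 2"
    using kannan \<open>y \<in> C\<close> funpow_mem[OF maps \<open>z \<in> C\<close>] unfolding orbitally_kannan_def by blast
  also have "\<dots> \<le> (orbit_radius T y + orbit_radius T z) / 2"
    using diminishes_radius_of_orbits_funpow[OF dim maps \<open>z \<in> C\<close>] by simp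
  finally show ?thesis using m by simp
qed

lemma norm_funpow_le_orbit_radius:
  assumes kannan: "orbitally_kannan T C" and dim: "diminishes_radius_of_orbits T C"
    and maps: "\<forall>x\<in>C. T x \<in> C" and "z \<in> C"
  shows "norm (z - (T ^^ n) z) \<le> orbit_radius T z"
proof -
  note kannan_z = orbitally_kannan_funpow[OF kannan dim maps \<open>z \<in> C\<close> \<open>z \<in> C\<close>]
  have "0 \<le> orbit_radius T z" using kannan_z[of 1] by simp
  have "norm (z - (T ^^ n) z) \<le> norm (z - T z) + orbit_radius T z" for n
  proof (cases n)
    case (Suc k)
    have "norm (z - (T ^^ n) z) \<le> norm (z - T z) + norm (T z - (T ^^ n) z)"
      using norm_triangle_ineq[of "z - T z" "T z - (T ^^ n) z"] by simp
    then show ?thesis using kannan_z[of n] Suc by simp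
  qed (simp add: \<open>0 \<le> orbit_radius T z\<close>)
  then have "bdd_above (range (\<lambda>n. norm (z - (T ^^ n) z)))"
    by (intro bdd_aboveI) auto
  then show ?thesis unfolding orbit_radius_eq_SUP by (rule cSUP_upper[OF UNIV_I])
qed

section \<open>Weak neighbourhoods and compactness\<close>

lemma openin_weak_topology_vimage:
  fixes f :: "'a::real_normed_vector \<Rightarrow> real"
  assumes "bounded_linear f" "open U"
  shows "openin weak_topology (f -` U)"
  unfolding weak_topology_def by (rule topology_generated_by_Basis) (use assms in blast)

lemma orbit_radius_weak_neighbourhood:
  assumes kannan: "orbitally_kannan T C" and dim: "diminishes_radius_of_orbits T C"
    and maps: "\<forall>x\<in>C. T x \<in> C" and "z \<in> C" and "0 \<le> r" "r < orbit_radius T z"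
  shows "\<exists>U \<delta>. openin weak_topology U \<and> z \<in> U \<and> 0 < \<delta> \<and>
           (\<forall>y\<in>C. orbit_radius T y - r < \<delta> \<longrightarrow> T y \<notin> U)"
proof -
  have "\<not> (\<forall>n. norm (z - (T ^^ n) z) \<le> (r + orbit_radius T z) / 2)"
    using orbit_radius_le[of z T] \<open>r < orbit_radius T z\<close> by fastforce
  then obtain m where m: "(r + orbit_radius T z) / 2 < norm (z - (T ^^ m) z)"
    by (auto simp: not_le)
  define v where "v = (T ^^ m) z"
  have "0 < m" using m \<open>0 \<le> r\<close> \<open>r < orbit_radius T z\<close> by (cases m) auto
  obtain f where f: "bounded_linear f" "f (z - v) = norm (z - v)" "\<And>u. f u \<le> norm u"
    using exists_norming_functional by blast
  define e where "e = (norm (z - v) + (r + orbit_radius T z) / 2) / 2"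
  have "f z = norm (z - v) + f v"
    using f(2) linear_diff[OF bounded_linear.linear[OF f(1)], of z v] by simp
  then have "z \<in> f -` {e + f v <..}"
    using m unfolding e_def v_def by simp
  moreover have "T y \<notin> f -` {e + f v <..}"
    if "y \<in> C" "orbit_radius T y - r < 2 * e - orbit_radius T z - r" for y
  proof -
    have "f (T y) - f v = f (T y - v)"
      by (simp add: linear_diff[OF bounded_linear.linear[OF f(1)]])
    also have "\<dots> \<le> norm (T y - v)" by (rule f(3))
    also have "\<dots> \<le> (orbit_radius T y + orbit_radius T z) / 2"
      unfolding v_def by (rule orbitally_kannan_funpow[OF kannan dim maps that(1) \<open>z \<in> C\<close> \<open>0 < m\<close>])
    also have "\<dots> < e" using that(2) by simp
    finally show ?thesis by simp
  qed
  moreover have "0 < 2 * e - orbit_radius T z - r"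
    using m unfolding e_def v_def by argo
  ultimately show ?thesis
    using openin_weak_topology_vimage[OF f(1) open_greaterThan]
    by (intro exI[of _ "f -` {e + f v <..}"] exI[of _ "2 * e - orbit_radius T z - r"]) blast
qed

lemma compactin_uniform_avoidance:
  fixes g :: "'b \<Rightarrow> real"
  assumes "compactin X K"
    and local: "\<And>z. z \<in> K \<Longrightarrow>
      \<exists>U \<delta>. openin X U \<and> z \<in> U \<and> 0 < \<delta> \<and> (\<forall>y\<in>S. g y < \<delta> \<longrightarrow> h y \<notin> U)"
  obtains \<delta> where "0 < \<delta>" "\<And>y. y \<in> S \<Longrightarrow> g y < \<delta> \<Longrightarrow> h y \<notin> K"
proof -
  define \<U> where "\<U> = {U. openin X U \<and> (\<exists>\<delta>>0. \<forall>y\<in>S. g y < \<delta> \<longrightarrow> h y \<notin> U)}"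
  have "K \<subseteq> \<Union>\<U>" using local unfolding \<U>_def by blast
  moreover have "\<forall>U\<in>\<U>. openin X U" unfolding \<U>_def by blast
  ultimately obtain \<F> where "finite \<F>" "\<F> \<subseteq> \<U>" "K \<subseteq> \<Union>\<F>"
    using \<open>compactin X K\<close> unfolding compactin_def by meson
  have "\<exists>\<delta>>0. \<forall>U\<in>\<F>. \<forall>y\<in>S. g y < \<delta> \<longrightarrow> h y \<notin> U"
    using \<open>finite \<F>\<close> \<open>\<F> \<subseteq> \<U>\<close>
  proof (induction rule: finite_subset_induct)
    case empty
    show ?case by (intro exI[of _ 1]) simp
  next
    case (insert U \<F>)
    obtain \<delta>1 where "0 < \<delta>1" "\<forall>y\<in>S. g y < \<delta>1 \<longrightarrow> h y \<notin> U"
      using \<open>U \<in> \<U>\<close> unfolding \<U>_def by blast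
    moreover obtain \<delta>2 where "0 < \<delta>2" "\<forall>V\<in>\<F>. \<forall>y\<in>S. g y < \<delta>2 \<longrightarrow> h y \<notin> V"
      using insert.IH by blast
    ultimately show ?case by (intro exI[of _ "min \<delta>1 \<delta>2"]) auto
  qed
  then show thesis using that \<open>K \<subseteq> \<Union>\<F>\<close> by blast
qed

theorem theorem4p3:
  fixes C :: "'a::banach set" and T :: "'a \<Rightarrow> 'a"
  assumes "C \<noteq> {}"
    and "weakly_compact C"
    and "convex C"
    and "\<forall>x\<in>C. T x \<in> C"
    and "orbitally_kannan T C"
    and "diminishes_radius_of_orbits T C"
  shows "\<exists>x\<in>C. \<forall>y\<in>C. rad x (orbit T x) \<le> rad y (orbit T y)"
proof (rule ccontr)
  assume no_minimum: "\<not> ?thesis"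
  note kannan = assms(5) and dim = assms(6) and maps = assms(4)
  define r where "r = Inf (orbit_radius T ` C)"
  have nonneg: "0 \<le> orbit_radius T y" if "y \<in> C" for y
    using norm_funpow_le_orbit_radius[OF kannan dim maps that, of 0] by simp
  then have r_le: "r \<le> orbit_radius T y" if "y \<in> C" for y
    unfolding r_def using that by (intro cInf_lower bdd_belowI[of _ 0]) auto
  have "0 \<le> r"
    unfolding r_def using \<open>C \<noteq> {}\<close> nonneg by (intro cInf_greatest) auto
  have "r < orbit_radius T z" if "z \<in> C" for z
    using no_minimum that r_le by (meson le_less_trans not_le)
  then obtain \<delta> where "0 < \<delta>" and avoid: "\<And>y. y \<in> C \<Longrightarrow> orbit_radius T y - r < \<delta> \<Longrightarrow> T y \<notin> C"
    using compactin_uniform_avoidance[of weak_topology C C "\<lambda>y. orbit_radius T y - r" T]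
      orbit_radius_weak_neighbourhood[OF kannan dim maps _ \<open>0 \<le> r\<close>] assms(2)
    unfolding weakly_compact_def by blast
  obtain y where "y \<in> C" "orbit_radius T y < r + \<delta>"
    using cInf_lessD[of "orbit_radius T ` C" "r + \<delta>"] \<open>C \<noteq> {}\<close> \<open>0 < \<delta>\<close> unfolding r_def by auto
  then show False using avoid maps by fastforce
qed

end
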